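(* Let $p,d,M,N,r\in\mathbb{N}$ and let $A_1,\ldots,A_p:\mathbb{R}^d\to\mathbb{R}^{M\times N}$ be continuous mappings such that the set of points $\mathbf{y}\in\mathbb{R}^d$ for which $\operatorname{rank}(A_i(\mathbf{y}))<r$ for every $i\in[p]$ has Lebesgue measure zero. Define $A:\mathbb{R}^p\times\mathbb{R}^d\to\mathbb{R}^{M\times N}$ by $A(\mathbf{x},\mathbf{y}) := \sum_{i=1}^p x_i A_i(\mathbf{y})$. Then the set of points $(\mathbf{x},\mathbf{y})\in\mathbb{R}^{p+d}$ for which $\operatorname{rank}(A(\mathbf{x},\mathbf{y}))<r$ has Lebesgue measure zero.
   Context: $[p]=\{1,\ldots,p\}$; $x_i$ denotes the $i$-th entry of $\mathbf{x}$. *)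

theory Defs
  imports "HOL-Analysis.Analysis"
begin

end

theory Submission
  imports Defs
begin

text \<open>
  The condition \<open>rank M < r\<close> is closed in \<open>M\<close>, so the exceptional set is Borel and, by
  Tonelli, it suffices that its \<open>x\<close>-sections are null for almost every \<open>y\<close>. Off the given
  null set some \<open>A\<^sub>j(y)\<close> has rank at least \<open>r\<close>. On a line in direction \<open>e\<^sub>j\<close> the matrix
  is \<open>B + t A\<^sub>j(y)\<close>, and a determinant witnessing \<open>rank A\<^sub>j(y) \<ge> r\<close> turns into a polynomial
  in \<open>1/t\<close> with nonzero constant term, so the rank drops below \<open>r\<close> for only finitely many
  \<open>t\<close>. A Borel set meeting every line of a parallel family in a null set is null, again by
  Tonelli.
\<close>

lemma dim_Un_le_card:
  fixes A F :: "'a::euclidean_space set"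
  assumes "finite F"
  shows "dim (A \<union> F) \<le> dim A + card F"
proof -
  obtain B where B: "B \<subseteq> A" "independent B" "A \<subseteq> span B" "card B = dim A"
    by (rule basis_exists)
  have "dim (A \<union> F) \<le> card (B \<union> F)"
    using B(2,3) assms span_superset[of "B \<union> F"] span_mono[of B "B \<union> F"]
    by (intro dim_le_card) (auto dest: independent_bound_general)
  also have "\<dots> \<le> card B + card F" by (rule card_Un_le)
  finally show ?thesis using B(4) by simp
qed

lemma rows_vec_lambda [simp]: "rows (\<chi> i. k i) = range k"
  by (auto simp: rows_def row_def)

lemma card_le_rank_if_det_nonzero:
  fixes M :: "real^'n^'m" and k :: "'m \<Rightarrow> real^'m"
  assumes det: "det (\<chi> i. k i) \<noteq> 0"
    and range: "\<And>i. i \<in> P \<Longrightarrow> k i \<in> range ((*v) M)"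
  shows "card P \<le> rank M"
proof -
  have "CARD('m) = dim (range k)"
    using det det_eq_0_rank[of "\<chi> i. k i"] rank_bound[of "\<chi> i. k i"] by (simp add: row_rank_def)
  also have "\<dots> \<le> dim (range ((*v) M) \<union> k ` (- P))"
    by (rule dim_subset) (auto simp: range)
  also have "\<dots> \<le> rank M + card (- P)"
    using dim_Un_le_card[of "k ` (- P)" "range ((*v) M)"] card_image_le[of "- P" k]
    by (simp add: rank_dim_range)
  finally show ?thesis
    using card_Diff_subset[of P UNIV] card_mono[of UNIV P] by (simp add: Compl_eq_Diff_UNIV)
qed

text \<open>
  A nonzero \<open>r \<times> r\<close> minor in coordinate-free form: a basis \<open>g\<close> of \<open>\<real>\<^sup>m\<close>, \<open>r\<close> of whose
  vectors lie in the column space of \<open>N\<close>.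
\<close>

lemma obtain_rank_witness:
  fixes N :: "real^'n^'m"
  assumes "r \<le> rank N"
  obtains P :: "'m set" and w :: "'m \<Rightarrow> real^'n" and g :: "'m \<Rightarrow> real^'m"
  where "card P = r" "\<And>i. i \<in> P \<Longrightarrow> N *v w i = g i" "det (\<chi> i. g i) \<noteq> 0"
proof -
  obtain C where C: "C \<subseteq> range ((*v) N)" "independent C" "card C = rank N"
    by (metis basis_exists rank_dim_range)
  obtain S where S: "S \<subseteq> C" "card S = r"
    using assms C(3) by (metis obtain_subset_with_card_n)
  obtain B where B: "S \<subseteq> B" "independent B" "span B = UNIV"
    using maximal_independent_subset_extend[OF subset_UNIV independent_mono[OF C(2) S(1)]]
    by (metis subset_antisym top_greatest)
  have "card B = CARD('m)"
    using B(2,3) dim_span[of B] by (simp add: dim_eq_card_independent)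
  then obtain g where g: "bij_betw g (UNIV :: 'm set) B"
    using independent_bound_general[OF B(2)] finite_same_card_bij[of "UNIV :: 'm set" B] by auto
  define P where "P = g -` S"
  have "card P = card S"
    using g B(1) unfolding P_def by (metis card_vimage_inj bij_betw_imp_inj_on bij_betw_imp_surj_on)
  moreover have "\<exists>v. N *v v = g i" if "i \<in> P" for i
    using that C(1) S(1) unfolding P_def by (metis vimageE subsetD rangeE)
  then obtain w where "\<And>i. i \<in> P \<Longrightarrow> N *v w i = g i" by metis
  moreover have "rank (\<chi> i. g i) = CARD('m)"
    using g B(2) \<open>card B = CARD('m)\<close> by (simp add: row_rank_def bij_betw_def dim_eq_card_independent)
  ultimately show ?thesis
    using S(2) det_eq_0_rank[of "\<chi> i. g i"] by (intro that[of P w g]) auto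
qed

lemma continuous_on_det_rows [continuous_intros]:
  fixes k :: "'m \<Rightarrow> 'a::topological_space \<Rightarrow> real^'m"
  assumes "\<And>i. continuous_on S (k i)"
  shows "continuous_on S (\<lambda>x. det (\<chi> i. k i x))"
  unfolding det_def using assms by (intro continuous_intros) simp

lemma continuous_on_matrix_vector_mult_left [continuous_intros]:
  fixes f :: "'a::topological_space \<Rightarrow> real^'n^'m"
  assumes "continuous_on S f"
  shows "continuous_on S (\<lambda>x. f x *v v)"
  unfolding matrix_vector_mult_def using assms
  by (intro continuous_intros continuous_on_vec_lambda)

lemma open_rank_ge: "open {M :: real^'n^'m. r \<le> rank M}"
proof (subst open_subopen, intro ballI)
  fix N :: "real^'n^'m" assume "N \<in> {M. r \<le> rank M}"
  then have "r \<le> rank N" by simp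
  then obtain P w and g :: "'m \<Rightarrow> real^'m"
    where P: "card P = r" "\<And>i. i \<in> P \<Longrightarrow> N *v w i = g i" "det (\<chi> i. g i) \<noteq> 0"
    by (metis obtain_rank_witness)
  define k where "k M i = (if i \<in> P then M *v w i else g i)" for M :: "real^'n^'m" and i
  define U where "U = {M. det (\<chi> i. k M i) \<noteq> 0}"
  have "continuous_on UNIV (\<lambda>M. k M i)" for i
    by (cases "i \<in> P") (simp_all add: k_def continuous_intros)
  then have "continuous_on UNIV (\<lambda>M. det (\<chi> i. k M i))"
    by (rule continuous_on_det_rows)
  then have "open U"
    unfolding U_def using open_Collect_neq[OF _ continuous_on_const] by blast
  moreover have "k N = g"
    using P(2) by (auto simp: k_def)
  then have "N \<in> U"
    using P(3) by (simp add: U_def)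
  moreover have "U \<subseteq> {M. r \<le> rank M}"
    using card_le_rank_if_det_nonzero[of "k M" P M for M] P(1) by (auto simp: U_def k_def)
  ultimately show "\<exists>T. open T \<and> N \<in> T \<and> T \<subseteq> {M. r \<le> rank M}" by blast
qed

lemma closed_Collect_rank_less:
  fixes L :: "'a::topological_space \<Rightarrow> real^'n^'m"
  assumes "continuous_on UNIV L"
  shows "closed {z. rank (L z) < r}"
proof -
  have "{z. rank (L z) < r} = - (L -` {M. r \<le> rank M})" by auto
  then show ?thesis
    using open_vimage[OF open_rank_ge assms] by (simp add: closed_def)
qed

lemma real_polynomial_function_det_affine:
  fixes u v :: "'m \<Rightarrow> real^'m"
  shows "real_polynomial_function (\<lambda>s. det (\<chi> i. u i + s *\<^sub>R v i))"
  unfolding det_def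
  by (simp, intro real_polynomial_function_sum real_polynomial_function_prod
      real_polynomial_function.intros(2-4) finite_Collect_subsets finite)
    (simp add: real_polynomial_function.intros(1) bounded_linear_ident)

lemma finite_zeros_real_polynomial_function:
  fixes q :: "real \<Rightarrow> real"
  assumes "real_polynomial_function q" "q a \<noteq> 0"
  shows "finite {z. q z = 0}"
proof -
  obtain c n where q: "q = (\<lambda>x. \<Sum>i\<le>n. c i * x ^ i)"
    using assms(1) by (auto simp: real_polynomial_function_iff_sum)
  then have "\<exists>i\<le>n. c i \<noteq> 0"
    using assms(2) by (metis (no_types, lifting) mult_eq_0_iff sum.neutral atMost_iff)
  then show ?thesis
    unfolding q by (simp add: polyfun_finite_roots)
qed

lemma finite_rank_less_on_line:
  fixes B N :: "real^'n^'m"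
  assumes "r \<le> rank N"
  shows "finite {t. rank (B + t *\<^sub>R N) < r}"
proof -
  obtain P w and g :: "'m \<Rightarrow> real^'m"
    where P: "card P = r" "\<And>i. i \<in> P \<Longrightarrow> N *v w i = g i" "det (\<chi> i. g i) \<noteq> 0"
    using assms by (metis obtain_rank_witness)
  define v where "v i = (if i \<in> P then B *v w i else 0)" for i
  define q where "q s = det (\<chi> i. g i + s *\<^sub>R v i)" for s
  have "finite {s. q s = 0}"
    using P(3) real_polynomial_function_det_affine[of g v]
    by (intro finite_zeros_real_polynomial_function[of q 0]) (simp_all add: q_def[abs_def])
  moreover have "t \<in> inverse ` {s. q s = 0}" if t: "t \<noteq> 0" "rank (B + t *\<^sub>R N) < r" for t
  proof -
    have "(B + t *\<^sub>R N) *v (inverse t *\<^sub>R w i) = g i + inverse t *\<^sub>R v i" if "i \<in> P" for i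
      using t(1) P(2)[OF that] that
      by (simp add: v_def algebra_simps scaleR_matrix_vector_assoc[symmetric])
    then have image: "g i + inverse t *\<^sub>R v i \<in> range ((*v) (B + t *\<^sub>R N))" if "i \<in> P" for i
      using that by (metis rangeI)
    have "q (inverse t) \<noteq> 0 \<Longrightarrow> card P \<le> rank (B + t *\<^sub>R N)"
      unfolding q_def using image by (rule card_le_rank_if_det_nonzero[rotated])
    then have "q (inverse t) = 0"
      using t(2) P(1) by linarith
    then show ?thesis
      by (intro image_eqI[of t inverse "inverse t"]) simp_all
  qed
  ultimately show ?thesis
    by (auto intro: finite_subset[of _ "insert 0 (inverse ` {s. q s = 0})"])
qed

lemma null_sets_lborel_pair_if_AE_slices:
  fixes S :: "('a::euclidean_space \<times> 'b::euclidean_space) set"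
  assumes S: "S \<in> sets borel"
    and slices: "AE y in lborel. (\<lambda>x. (x, y)) -` S \<in> null_sets lborel"
  shows "S \<in> null_sets lborel"
proof -
  have S': "S \<in> sets (lborel \<Otimes>\<^sub>M lborel)"
    using S by (subst lborel_prod) simp
  have "emeasure (lborel \<Otimes>\<^sub>M lborel) S = (\<integral>\<^sup>+ y. emeasure lborel ((\<lambda>x. (x, y)) -` S) \<partial>lborel)"
    using S' by (rule lborel_pair.emeasure_pair_measure_alt2)
  also have "\<dots> = (\<integral>\<^sup>+ y. 0 \<partial>(lborel :: 'b measure))"
    by (rule nn_integral_cong_AE, rule eventually_mono[OF slices]) (simp add: null_sets_def)
  finally have "S \<in> null_sets (lborel \<Otimes>\<^sub>M lborel)"
    using S' by (intro null_setsI) simp_all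
  then show ?thesis
    by (simp add: lborel_prod)
qed

lemma null_sets_lborel_if_null_on_lines:
  fixes Z :: "'a::euclidean_space set" and v :: 'a
  assumes Z: "Z \<in> sets borel"
    and lines: "\<And>w. {t::real. w + t *\<^sub>R v \<in> Z} \<in> null_sets lborel"
  shows "Z \<in> null_sets lborel"
proof -
  define E where "E = (\<lambda>(t::real, w). w + t *\<^sub>R v) -` Z"
  have E: "E \<in> sets borel"
    unfolding E_def case_prod_unfold
    by (intro measurable_sets_borel[OF borel_measurable_continuous_onI Z] continuous_intros)
  then have "E \<in> null_sets lborel"
    using lines by (intro null_sets_lborel_pair_if_AE_slices) (simp_all add: E_def vimage_def)
  then have "AE z in lborel \<Otimes>\<^sub>M lborel. z \<notin> E"
    by (simp add: lborel_prod AE_not_in)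
  then have "AE t in lborel. AE w in lborel. (t, w) \<notin> E"
    by (rule lborel_pair.AE_pair)
  moreover have "ae_filter (lborel :: real measure) \<noteq> bot"
    by (simp add: ae_filter_eq_bot_iff)
  ultimately obtain t where "AE w in lborel. w + t *\<^sub>R v \<notin> Z"
    by (auto simp: E_def dest: eventually_happens)
  moreover have "(\<lambda>w. w + t *\<^sub>R v) -` Z \<in> sets borel"
    by (intro measurable_sets_borel[OF borel_measurable_continuous_onI Z] continuous_intros)
  ultimately have "{w. w + t *\<^sub>R v \<in> Z} \<in> null_sets lborel"
    by (simp add: AE_iff_null_sets vimage_def)
  from null_sets_translation[OF this, of "t *\<^sub>R v"] show ?thesis
    by simp
qed

lemma sum_scaleR_add_axis:
  fixes C :: "'p::finite \<Rightarrow> 'a::real_vector"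
  shows "(\<Sum>i\<in>UNIV. (w + t *\<^sub>R axis j 1) $ i *\<^sub>R C i) = (\<Sum>i\<in>UNIV. w $ i *\<^sub>R C i) + t *\<^sub>R C j"
proof -
  have "(w + t *\<^sub>R axis j 1) $ i *\<^sub>R C i = w $ i *\<^sub>R C i + (if i = j then t *\<^sub>R C j else 0)" for i
    by (simp add: axis_def scaleR_add_left)
  then show ?thesis
    by (simp add: sum.distrib)
qed

lemma null_sets_rank_less_pencil:
  fixes C :: "'p::finite \<Rightarrow> real^'n^'m"
  assumes "r \<le> rank (C j)"
  shows "{x :: real^'p. rank (\<Sum>i\<in>UNIV. x $ i *\<^sub>R C i) < r} \<in> null_sets lborel"
proof (rule null_sets_lborel_if_null_on_lines)
  show "{x :: real^'p. rank (\<Sum>i\<in>UNIV. x $ i *\<^sub>R C i) < r} \<in> sets borel"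
    by (intro borel_closed closed_Collect_rank_less continuous_intros)
  fix w :: "real^'p"
  have "finite {t. rank ((\<Sum>i\<in>UNIV. w $ i *\<^sub>R C i) + t *\<^sub>R C j) < r}"
    using assms by (rule finite_rank_less_on_line)
  then show "{t. w + t *\<^sub>R axis j 1 \<in> {x. rank (\<Sum>i\<in>UNIV. x $ i *\<^sub>R C i) < r}} \<in> null_sets lborel"
    unfolding mem_Collect_eq sum_scaleR_add_axis by (rule finite_imp_null_set_lborel)
qed

theorem lemma2:
  fixes A :: "'p::finite \<Rightarrow> real^'d \<Rightarrow> real^'n^'m"
    and r :: nat
  assumes cont: "\<And>i. continuous_on UNIV (A i)"
    and null: "{y. \<forall>i. rank (A i y) < r} \<in> null_sets lebesgue"
  shows "{(x :: real^'p, y :: real^'d).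
            rank (\<Sum>i\<in>UNIV. (x $ i) *\<^sub>R A i y) < r} \<in> null_sets lebesgue"
proof -
  let ?S = "{(x :: real^'p, y :: real^'d). rank (\<Sum>i\<in>UNIV. (x $ i) *\<^sub>R A i y) < r}"
  have "continuous_on UNIV (\<lambda>z :: (real^'p) \<times> (real^'d). \<Sum>i\<in>UNIV. fst z $ i *\<^sub>R A i (snd z))"
    by (intro continuous_intros continuous_on_compose2[OF cont]) auto
  from closed_Collect_rank_less[OF this, of r] have "?S \<in> sets borel"
    by (intro borel_closed) (simp add: case_prod_unfold)
  moreover obtain Y where Y: "Y \<in> null_sets lborel" "{y. \<forall>i. rank (A i y) < r} \<subseteq> Y"
    using null by (auto simp: null_sets_completion_iff2)
  have "AE y in lborel. (\<lambda>x. (x, y)) -` ?S \<in> null_sets lborel"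
  proof (rule AE_I'[OF Y(1)], safe)
    fix y assume "(\<lambda>x. (x, y)) -` ?S \<notin> null_sets lborel"
    with null_sets_rank_less_pencil[of r "\<lambda>i. A i y"] show "y \<in> Y"
      using Y(2) by (fastforce simp: vimage_def not_le)
  qed
  ultimately show ?thesis
    by (intro null_sets_completionI null_sets_lborel_pair_if_AE_slices)
qed

end
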